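(* Let $\Omega\subset\mathbb{R}^d$ be a bounded open set whose boundary $\partial\Omega$ is split into a part $\Gamma_D$ of positive surface measure and $\Gamma_N=\partial\Omega\setminus\Gamma_D$. Let $\mathbb{A}^\varepsilon\in (L^\infty(\Omega))^{d\times d}$ be symmetric with $\alpha|\boldsymbol{\xi}|^2\le \mathbb{A}^\varepsilon(\boldsymbol{x})\boldsymbol{\xi}\cdot\boldsymbol{\xi}\le\beta|\boldsymbol{\xi}|^2$ for all $\boldsymbol{\xi}\in\mathbb{R}^d$ and a.e. $\boldsymbol{x}\in\Omega$, for some $0<\alpha\le\beta$. Let $f\in L^2(\Omega)$, $g\in L^2(\Gamma_N)$, $V=\{v\in H^1(\Omega):\ v=0 \text{ on }\Gamma_D\}$, $B^\varepsilon(u,v)=\int_\Omega \mathbb{A}^\varepsilon\nabla u\cdot\nabla v$ and $F(v)=\int_\Omega fv+\int_{\Gamma_N} gv$. Let $Q:V\to\mathbb{R}$ be a continuous linear functional. Let $u^\varepsilon\in V$ satisfy $B^\varepsilon(u^\varepsilon,v)=F(v)$ for all $v\in V$, and set $\boldsymbol{q}^\varepsilon=\mathbb{A}^\varepsilon\nabla u^\varepsilon$. Let $W$ be a real vector space containing $V$ and let $Q$ be extended to a linear functional on $W$ (still denoted $Q$). Let $u^\varepsilon_H\in W$, let $\widehat{u}^\varepsilon_H\in V$ and $\widehat{\widetilde{u}}^\varepsilon_H\in V$ be arbitrary, let $\widehat{\boldsymbol{q}}^\varepsilon_H\in\mathcal{S}$ and $\widehat{\widetilde{\boldsymbol{q}}}^\varepsilon_H\in\widetilde{\mathcal{S}}$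 be arbitrary, where $\mathcal{S}=\{\boldsymbol{p}\in H(\mathrm{div},\Omega):\ \forall v\in V,\ \int_\Omega \boldsymbol{p}\cdot\nabla v=F(v)\}$ and $\widetilde{\mathcal{S}}=\{\boldsymbol{p}\in H(\mathrm{div},\Omega):\ \forall v\in V,\ \int_\Omega \boldsymbol{p}\cdot\nabla v=Q(v)\}$. Define $\Delta Q=Q(\widehat{u}^\varepsilon_H-u^\varepsilon_H)$, $$\overline{C}^\varepsilon_H=\frac12\int_\Omega(\mathbb{A}^\varepsilon)^{-1}\big(\widehat{\boldsymbol{q}}^\varepsilon_H-\mathbb{A}^\varepsilon\nabla\widehat{u}^\varepsilon_H\big)\cdot\big(\widehat{\widetilde{\boldsymbol{q}}}^\varepsilon_H+\mathbb{A}^\varepsilon\nabla\widehat{\widetilde{u}}^\varepsilon_H\big),$$ $E_{CRE}=E_{CRE}(\widehat{u}^\varepsilon_H,\widehat{\boldsymbol{q}}^\varepsilon_H)$ and $\widetilde{E}_{CRE}=E_{CRE}(\widehat{\widetilde{u}}^\varepsilon_H,\widehat{\widetilde{\boldsymbol{q}}}^\varepsilon_H)$, where for $v\in V$ and $\boldsymbol{p}\in L^2(\Omega)^d$, $E_{CRE}(v,\boldsymbol{p})=\big(\int_\Omega(\mathbb{A}^\varepsilon)^{-1}(\boldsymbol{p}-\mathbb{A}^\varepsilon\nabla v)\cdot(\boldsymbol{p}-\mathbb{A}^\varepsilon\nabla v)\big)^{1/2}$. Then $$\big|Q(u^\varepsilon)-Q(u^\varepsilon_H)-\Delta Q-\overline{C}^\varepsilon_H\big|\le\frac12\,E_{CRE}\,\widetilde{E}_{CRE},$$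 and consequently $$|Q(u^\varepsilon)-Q(u^\varepsilon_H)|\le\eta^Q:=\max_{\theta=\pm1}\Big|\Delta Q+\overline{C}^\varepsilon_H+\frac{\theta}{2}E_{CRE}\,\widetilde{E}_{CRE}\Big|.$$
   Context: $H(\mathrm{div},\Omega)$ denotes the space of vector fields in $L^2(\Omega)^d$ whose distributional divergence lies in $L^2(\Omega)$. The quantity $E_{CRE}$ is the constitutive relation error functional. In the intended application, $u^\varepsilon_H$ is a (possibly nonconforming) multiscale finite element approximation of $u^\varepsilon$, $\widehat{u}^\varepsilon_H\in V$ a conforming reconstruction of it, $\widehat{\widetilde{u}}^\varepsilon_H\in V$ an approximation of the adjoint solution $\widetilde{u}^\varepsilon\in V$ (defined by $B^\varepsilon(v,\widetilde{u}^\varepsilon)=Q(v)$ for all $v\in V$), and $\widehat{\boldsymbol{q}}^\varepsilon_H$, $\widehat{\widetilde{\boldsymbol{q}}}^\varepsilon_H$ equilibrated fluxes for the primal and adjoint problems; the statement holds for arbitrary such elements. *)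

theory Defs
  imports "HOL-Analysis.Analysis"
begin

definition C1_fun :: "((real,'d::finite) vec \<Rightarrow> real) \<Rightarrow> bool" where
  "C1_fun \<phi> \<longleftrightarrow> (\<exists>D. continuous_on UNIV D \<and>
       (\<forall>x. (\<phi> has_derivative (\<lambda>h. D x \<bullet> h)) (at x)))"

definition cgrad :: "((real,'d::finite) vec \<Rightarrow> real) \<Rightarrow> (real,'d) vec \<Rightarrow> (real,'d) vec" where
  "cgrad \<phi> x = (\<chi> i. frechet_derivative \<phi> (at x) (axis i 1))"

definition test_fn :: "(real,'d::finite) vec set \<Rightarrow> ((real,'d) vec \<Rightarrow> real) \<Rightarrow> bool" where
  "test_fn \<Omega> \<phi> \<longleftrightarrow> C1_fun \<phi> \<and> compact (closure {x. \<phi> x \<noteq> 0})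
      \<and> closure {x. \<phi> x \<noteq> 0} \<subseteq> \<Omega>"

definition sq_int :: "'a measure \<Rightarrow> ('a \<Rightarrow> real) \<Rightarrow> bool" where
  "sq_int M f \<longleftrightarrow> f \<in> borel_measurable M \<and> integrable M (\<lambda>x. (f x)\<^sup>2)"

definition vsq_int :: "'a measure \<Rightarrow> ('a \<Rightarrow> (real,'d::finite) vec) \<Rightarrow> bool" where
  "vsq_int M p \<longleftrightarrow> p \<in> borel_measurable M \<and> integrable M (\<lambda>x. (norm (p x))\<^sup>2)"

definition is_wgrad :: "(real,'d::finite) vec set \<Rightarrow> ((real,'d) vec \<Rightarrow> real)
     \<Rightarrow> ((real,'d) vec \<Rightarrow> (real,'d) vec) \<Rightarrow> bool" where
  "is_wgrad \<Omega> v G \<longleftrightarrow> (\<forall>\<phi>. test_fn \<Omega> \<phi> \<longrightarrow> (\<forall>i.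
      (LINT x|lebesgue_on \<Omega>. v x * (cgrad \<phi> x $ i))
        = - (LINT x|lebesgue_on \<Omega>. (G x $ i) * \<phi> x)))"

definition H1 :: "(real,'d::finite) vec set \<Rightarrow> ((real,'d) vec \<Rightarrow> real) \<Rightarrow> bool" where
  "H1 \<Omega> v \<longleftrightarrow> sq_int (lebesgue_on \<Omega>) v \<and>
      (\<exists>G. vsq_int (lebesgue_on \<Omega>) G \<and> is_wgrad \<Omega> v G)"

(* a (the, up to a.e. equality) weak gradient *)
definition wgrad :: "(real,'d::finite) vec set \<Rightarrow> ((real,'d) vec \<Rightarrow> real)
     \<Rightarrow> (real,'d) vec \<Rightarrow> (real,'d) vec" where
  "wgrad \<Omega> v = (SOME G. vsq_int (lebesgue_on \<Omega>) G \<and> is_wgrad \<Omega> v G)"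

definition H1_norm :: "(real,'d::finite) vec set \<Rightarrow> ((real,'d) vec \<Rightarrow> real) \<Rightarrow> real" where
  "H1_norm \<Omega> v = sqrt ((LINT x|lebesgue_on \<Omega>. (v x)\<^sup>2)
                       + (LINT x|lebesgue_on \<Omega>. (norm (wgrad \<Omega> v x))\<^sup>2))"

definition Hdiv :: "(real,'d::finite) vec set \<Rightarrow> ((real,'d) vec \<Rightarrow> (real,'d) vec) \<Rightarrow> bool" where
  "Hdiv \<Omega> p \<longleftrightarrow> vsq_int (lebesgue_on \<Omega>) p \<and>
      (\<exists>h. sq_int (lebesgue_on \<Omega>) h \<and> (\<forall>\<phi>. test_fn \<Omega> \<phi> \<longrightarrow>
          (LINT x|lebesgue_on \<Omega>. p x \<bullet> cgrad \<phi> x) = - (LINT x|lebesgue_on \<Omega>. h x * \<phi> x)))"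

definition hausdorff_pre :: "nat \<Rightarrow> real \<Rightarrow> 'a::metric_space set \<Rightarrow> ennreal" where
  "hausdorff_pre s \<delta> A = Inf {(\<Sum>i. ennreal (if C i = {} then 0 else diameter (C i) ^ s)) | C.
      A \<subseteq> (\<Union>i. C i) \<and> (\<forall>i. bounded (C i) \<and> diameter (C i) \<le> \<delta>)}"

definition hausdorff_outer :: "nat \<Rightarrow> 'a::metric_space set \<Rightarrow> ennreal" where
  "hausdorff_outer s A = ennreal (pi powr (real s / 2) / Gamma (real s / 2 + 1) / 2 ^ s)
       * (SUP \<delta>\<in>{0<..}. hausdorff_pre s \<delta> A)"

definition surface_measure :: "(real,'d::finite) vec measure" where
  "surface_measure = measure_of UNIV (sets borel) (hausdorff_outer (CARD('d) - 1))"

(* t is a boundary trace of v: limit on the boundary of C^1 (up to the boundary)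
   functions approximating v in H^1 *)
definition has_trace :: "(real,'d::finite) vec set \<Rightarrow> ((real,'d) vec \<Rightarrow> real)
     \<Rightarrow> ((real,'d) vec \<Rightarrow> real) \<Rightarrow> bool" where
  "has_trace \<Omega> v t \<longleftrightarrow> (\<exists>(\<phi>::nat \<Rightarrow> (real,'d) vec \<Rightarrow> real) G.
      vsq_int (lebesgue_on \<Omega>) G \<and> is_wgrad \<Omega> v G \<and> (\<forall>k. C1_fun (\<phi> k)) \<and>
      ((\<lambda>k. \<integral>\<^sup>+ x\<in>\<Omega>. ennreal ((\<phi> k x - v x)\<^sup>2) \<partial>lebesgue) \<longlonglongrightarrow> 0) \<and>
      ((\<lambda>k. \<integral>\<^sup>+ x\<in>\<Omega>. ennreal ((norm (cgrad (\<phi> k) x - G x))\<^sup>2) \<partial>lebesgue) \<longlonglongrightarrow> 0) \<and>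
      ((\<lambda>k. \<integral>\<^sup>+ x\<in>frontier \<Omega>. ennreal ((\<phi> k x - t x)\<^sup>2) \<partial>surface_measure) \<longlonglongrightarrow> 0))"

definition trace :: "(real,'d::finite) vec set \<Rightarrow> ((real,'d) vec \<Rightarrow> real) \<Rightarrow> (real,'d) vec \<Rightarrow> real" where
  "trace \<Omega> v = (SOME t. has_trace \<Omega> v t)"

definition Vsp :: "(real,'d::finite) vec set \<Rightarrow> (real,'d) vec set \<Rightarrow> ((real,'d) vec \<Rightarrow> real) set" where
  "Vsp \<Omega> \<Gamma>D = {v. H1 \<Omega> v \<and> (\<exists>t. has_trace \<Omega> v t \<and>
                    (AE x in surface_measure. x \<in> \<Gamma>D \<longrightarrow> t x = 0))}"

definition Ffun :: "(real,'d::finite) vec set \<Rightarrow> (real,'d) vec set \<Rightarrow> ((real,'d) vec \<Rightarrow> real)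
     \<Rightarrow> ((real,'d) vec \<Rightarrow> real) \<Rightarrow> ((real,'d) vec \<Rightarrow> real) \<Rightarrow> real" where
  "Ffun \<Omega> \<Gamma>N f g v = (LINT x|lebesgue_on \<Omega>. f x * v x)
       + (LINT x|surface_measure. indicator \<Gamma>N x * g x * trace \<Omega> v x)"

definition ECRE :: "(real,'d::finite) vec set \<Rightarrow> ((real,'d) vec \<Rightarrow> ((real,'d) vec,'d) vec)
     \<Rightarrow> ((real,'d) vec \<Rightarrow> real) \<Rightarrow> ((real,'d) vec \<Rightarrow> (real,'d) vec) \<Rightarrow> real" where
  "ECRE \<Omega> A v p = sqrt (LINT x|lebesgue_on \<Omega>.
      (matrix_inv (A x) *v (p x - A x *v wgrad \<Omega> v x)) \<bullet> (p x - A x *v wgrad \<Omega> v x))"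

definition Cbar :: "(real,'d::finite) vec set \<Rightarrow> ((real,'d) vec \<Rightarrow> ((real,'d) vec,'d) vec)
     \<Rightarrow> ((real,'d) vec \<Rightarrow> real) \<Rightarrow> ((real,'d) vec \<Rightarrow> (real,'d) vec)
     \<Rightarrow> ((real,'d) vec \<Rightarrow> real) \<Rightarrow> ((real,'d) vec \<Rightarrow> (real,'d) vec) \<Rightarrow> real" where
  "Cbar \<Omega> A uh qh uth qth = (1/2) * (LINT x|lebesgue_on \<Omega>.
      (matrix_inv (A x) *v (qh x - A x *v wgrad \<Omega> uh x)) \<bullet> (qth x + A x *v wgrad \<Omega> uth x))"

end

theory Submission
  imports Defs
begin

text \<open>Pair fluxes by the energy form \<open>(p, r) = \<integral> A\<^sup>-\<^sup>1 p \<cdot> r\<close> (Prager--Synge). Let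
  \<open>\<sigma> = qh - A \<nabla>uh\<close> and \<open>\<tau> = qth - A \<nabla>uth\<close> be the two constitutive errors and
  \<open>w = A \<nabla>u - (qh + A \<nabla>uh) / 2\<close> the exact flux seen from the centre of the hypercircle
  through \<open>qh\<close> and \<open>A \<nabla>uh\<close>. By the equilibrium equations of \<open>u\<close>, \<open>qh\<close> and \<open>qth\<close>, a
  pointwise computation gives \<open>Q(u) - Q(uh) - C = (\<tau>, w)\<close>. Since \<open>A \<nabla>u - qh\<close> is orthogonal to
  every gradient of \<open>V\<close>, \<open>(w, w) = (\<sigma>, \<sigma>) / 4\<close>, and Cauchy--Schwarz for the energy form gives
  \<open>|(\<tau>, w)| \<le> E \<cdot> Et / 2\<close>; the bound by \<open>\<eta>\<^sup>Q\<close> is a rearrangement.\<close>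

lemma matrix_inv_mult_left:
  fixes A :: "real^'n^'n"
  assumes "invertible A"
  shows "matrix_inv A *v (A *v x) = x"
proof -
  have "matrix_inv A ** A = mat 1"
    using assms unfolding invertible_def matrix_inv_def by (metis (mono_tags, lifting) someI_ex)
  then show ?thesis by (simp add: matrix_vector_mul_assoc)
qed

lemma matrix_inv_mult_right:
  fixes A :: "real^'n^'n"
  assumes "invertible A"
  shows "A *v (matrix_inv A *v x) = x"
proof -
  have "A ** matrix_inv A = mat 1"
    using assms unfolding invertible_def matrix_inv_def by (metis (mono_tags, lifting) someI_ex)
  then show ?thesis by (simp add: matrix_vector_mul_assoc)
qed

text \<open>For a singular matrix, \<^const>\<open>matrix_inv\<close> is the junk value \<open>SOME _. False\<close>; naming it
  lets measurability of \<open>x \<mapsto> matrix_inv (A x)\<close> be proved by cases on the determinant.\<close>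

lemma matrix_inv_singular:
  fixes A :: "real^'n^'n"
  assumes "\<not> invertible A"
  shows "matrix_inv A = (SOME _. False)"
  using assms unfolding matrix_inv_def invertible_def by meson

lemma matrix_inv_mult_Cramer:
  fixes A :: "real^'n^'n"
  assumes "det A \<noteq> 0"
  shows "matrix_inv A *v b = (\<chi> k. det (\<chi> i j. if j = k then b $ i else A $ i $ j) / det A)"
  using assms cramer matrix_inv_mult_right invertible_det_nz by blast

lemma symmetric_matrix_inner:
  fixes A :: "real^'n^'n"
  assumes "transpose A = A"
  shows "(A *v x) \<bullet> y = x \<bullet> (A *v y)"
  by (metis assms dot_lmul_matrix inner_commute vector_transpose_matrix)

lemma coercive_matrix_invertible:
  fixes A :: "real^'n^'n"
  assumes "0 < \<alpha>" and coercive: "\<forall>\<xi>. \<alpha> * (norm \<xi>)\<^sup>2 \<le> (A *v \<xi>) \<bullet> \<xi>"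
  shows "invertible A"
proof -
  have "x = y" if "A *v x = A *v y" for x y
  proof -
    have "\<alpha> * (norm (x - y))\<^sup>2 \<le> 0"
      using coercive[rule_format, of "x - y"] that by (simp add: matrix_vector_mult_diff_distrib)
    then show "x = y" using \<open>0 < \<alpha>\<close> by (simp add: mult_le_0_iff)
  qed
  then have "inj ((*v) A)" by (rule injI)
  then show ?thesis using matrix_left_invertible_injective invertible_left_inverse by blast
qed

lemma symmetric_matrix_inv_inner:
  fixes A :: "real^'n^'n"
  assumes "transpose A = A" "invertible A"
  shows "(matrix_inv A *v x) \<bullet> y = x \<bullet> (matrix_inv A *v y)"
  by (metis assms symmetric_matrix_inner matrix_inv_mult_right)

lemma coercive_matrix_inv_inner_ge:
  fixes A :: "real^'n^'n"
  assumes "invertible A" and "\<forall>\<xi>. \<alpha> * (norm \<xi>)\<^sup>2 \<le> (A *v \<xi>) \<bullet> \<xi>"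
  shows "\<alpha> * (norm (matrix_inv A *v x))\<^sup>2 \<le> (matrix_inv A *v x) \<bullet> x"
  by (metis assms inner_commute matrix_inv_mult_right)

lemma coercive_matrix_inv_inner_nonneg:
  fixes A :: "real^'n^'n"
  assumes "0 < \<alpha>" "invertible A" "\<forall>\<xi>. \<alpha> * (norm \<xi>)\<^sup>2 \<le> (A *v \<xi>) \<bullet> \<xi>"
  shows "0 \<le> (matrix_inv A *v x) \<bullet> x"
  using coercive_matrix_inv_inner_ge[OF assms(2,3), of x] \<open>0 < \<alpha>\<close>
  by (smt (verit) mult_nonneg_nonneg zero_le_power2)

lemma norm_coercive_matrix_inv_mult_le:
  fixes A :: "real^'n^'n"
  assumes "0 < \<alpha>" "invertible A" "\<forall>\<xi>. \<alpha> * (norm \<xi>)\<^sup>2 \<le> (A *v \<xi>) \<bullet> \<xi>"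
  shows "norm (matrix_inv A *v x) \<le> (1 / \<alpha>) * norm x"
proof -
  let ?y = "matrix_inv A *v x"
  have "\<alpha> * norm ?y * norm ?y \<le> norm ?y * norm x"
    using coercive_matrix_inv_inner_ge[OF assms(2,3), of x] Cauchy_Schwarz_ineq2[of ?y x]
    by (simp add: power2_eq_square mult.assoc)
  then have "\<alpha> * norm ?y \<le> norm x"
    by (cases "norm ?y = 0") (simp_all add: mult.commute mult_le_cancel_left)
  then show ?thesis using \<open>0 < \<alpha>\<close> by (simp add: field_simps)
qed

lemma borel_measurable_vec_iff:
  fixes f :: "'a \<Rightarrow> real^'n"
  shows "f \<in> borel_measurable M \<longleftrightarrow> (\<forall>i. (\<lambda>x. f x $ i) \<in> borel_measurable M)"
proof
  assume "f \<in> borel_measurable M"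
  then show "\<forall>i. (\<lambda>x. f x $ i) \<in> borel_measurable M"
    by (auto intro: measurable_compose[OF _ borel_measurable_nth])
next
  assume "\<forall>i. (\<lambda>x. f x $ i) \<in> borel_measurable M"
  then have "\<forall>b\<in>Basis. (\<lambda>x. f x \<bullet> b) \<in> borel_measurable M"
    by (auto simp: Basis_vec_def cart_eq_inner_axis[symmetric])
  then show "f \<in> borel_measurable M"
    by (rule iffD2[OF borel_measurable_euclidean_space])
qed

lemma borel_measurable_det:
  fixes A :: "'a \<Rightarrow> real^'n^'n"
  assumes "\<And>i j. (\<lambda>x. A x $ i $ j) \<in> borel_measurable M"
  shows "(\<lambda>x. det (A x)) \<in> borel_measurable M"
  unfolding det_def using assms by measurable

lemma borel_measurable_matrix_vector_mult:
  fixes A :: "'a \<Rightarrow> real^'n^'m"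
  assumes "\<And>i j. (\<lambda>x. A x $ i $ j) \<in> borel_measurable M" and "p \<in> borel_measurable M"
  shows "(\<lambda>x. A x *v p x) \<in> borel_measurable M"
  unfolding borel_measurable_vec_iff matrix_vector_mult_def vec_lambda_beta
  by (intro allI borel_measurable_sum borel_measurable_times assms(1)
      measurable_compose[OF assms(2) borel_measurable_nth])

lemma borel_measurable_matrix_inv_mult:
  fixes A :: "'a \<Rightarrow> real^'n^'n"
  assumes A: "\<And>i j. (\<lambda>x. A x $ i $ j) \<in> borel_measurable M" and p: "p \<in> borel_measurable M"
  shows "(\<lambda>x. matrix_inv (A x) *v p x) \<in> borel_measurable M"
proof -
  let ?Cramer = "\<lambda>x. (\<chi> k. det (\<chi> i j. if j = k then p x $ i else A x $ i $ j) / det (A x)) :: real^'n"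
  have eq: "matrix_inv (A x) *v p x = (if det (A x) = 0 then (SOME _. False) *v p x else ?Cramer x)" for x
    by (simp add: matrix_inv_singular matrix_inv_mult_Cramer invertible_det_nz)
  have det: "(\<lambda>x. det (A x)) \<in> borel_measurable M"
    using A by (rule borel_measurable_det)
  have minors: "(\<lambda>x. det (\<chi> i j. if j = k then p x $ i else A x $ i $ j)) \<in> borel_measurable M" for k
  proof (rule borel_measurable_det)
    show "(\<lambda>x. (\<chi> i j. if j = k then p x $ i else A x $ i $ j) $ i $ j) \<in> borel_measurable M" for i j
      using A measurable_compose[OF p borel_measurable_nth] by (cases "j = k") simp_all
  qed
  have "(\<lambda>x. (SOME _. False) *v p x) \<in> borel_measurable M"
    using p by (intro borel_measurable_matrix_vector_mult) simp_all
  moreover have "?Cramer \<in> borel_measurable M"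
    unfolding borel_measurable_vec_iff using det minors by simp
  ultimately show ?thesis
    unfolding eq using det by measurable
qed

lemma vsq_int_add:
  fixes p r :: "'a \<Rightarrow> real^'n"
  assumes "vsq_int M p" "vsq_int M r"
  shows "vsq_int M (\<lambda>x. p x + r x)"
  unfolding vsq_int_def
proof
  show meas: "(\<lambda>x. p x + r x) \<in> borel_measurable M"
    using assms unfolding vsq_int_def by (intro borel_measurable_add) simp_all
  have bound: "(norm (a + b))\<^sup>2 \<le> 2 * (norm a)\<^sup>2 + 2 * (norm b)\<^sup>2" for a b :: "real^'n"
  proof -
    have "(norm (a + b))\<^sup>2 \<le> (norm a + norm b)\<^sup>2"
      by (simp add: norm_triangle_ineq power_mono)
    also have "\<dots> \<le> 2 * (norm a)\<^sup>2 + 2 * (norm b)\<^sup>2"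
      using sum_squares_ge_zero[of "norm a - norm b" 0] by (simp add: power2_eq_square algebra_simps)
    finally show ?thesis .
  qed
  show "integrable M (\<lambda>x. (norm (p x + r x))\<^sup>2)"
  proof (rule Bochner_Integration.integrable_bound)
    show "integrable M (\<lambda>x. 2 * (norm (p x))\<^sup>2 + 2 * (norm (r x))\<^sup>2)"
      using assms unfolding vsq_int_def by simp
    show "(\<lambda>x. (norm (p x + r x))\<^sup>2) \<in> borel_measurable M"
      using meas by measurable
    show "AE x in M. norm ((norm (p x + r x))\<^sup>2) \<le> norm (2 * (norm (p x))\<^sup>2 + 2 * (norm (r x))\<^sup>2)"
      using bound by simp
  qed
qed

lemma vsq_int_scaleR:
  fixes p :: "'a \<Rightarrow> real^'n"
  assumes "vsq_int M p"
  shows "vsq_int M (\<lambda>x. c *\<^sub>R p x)"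
  using assms unfolding vsq_int_def by (auto simp: power_mult_distrib)

lemma vsq_int_diff:
  fixes p r :: "'a \<Rightarrow> real^'n"
  assumes "vsq_int M p" "vsq_int M r"
  shows "vsq_int M (\<lambda>x. p x - r x)"
  using vsq_int_add[OF assms(1) vsq_int_scaleR[OF assms(2), of "-1"]] by simp

lemma integrable_inner_vsq_int:
  fixes p r :: "'a \<Rightarrow> real^'n"
  assumes "vsq_int M p" "vsq_int M r"
  shows "integrable M (\<lambda>x. p x \<bullet> r x)"
proof (rule Bochner_Integration.integrable_bound)
  show "integrable M (\<lambda>x. (norm (p x))\<^sup>2 + (norm (r x))\<^sup>2)"
    using assms unfolding vsq_int_def by simp
  show "(\<lambda>x. p x \<bullet> r x) \<in> borel_measurable M"
    using assms unfolding vsq_int_def by (intro borel_measurable_inner) simp_all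
  have "\<bar>a \<bullet> b\<bar> \<le> (norm a)\<^sup>2 + (norm b)\<^sup>2" for a b :: "real^'n"
    using Cauchy_Schwarz_ineq2[of a b] sum_squares_ge_zero[of "norm a - norm b" 0]
    by (simp add: power2_eq_square algebra_simps)
  then show "AE x in M. norm (p x \<bullet> r x) \<le> norm ((norm (p x))\<^sup>2 + (norm (r x))\<^sup>2)"
    by simp
qed

lemma integral_inner_diff_left:
  fixes p q r :: "'a \<Rightarrow> real^'n"
  assumes "vsq_int M p" "vsq_int M q" "vsq_int M r"
  shows "(LINT x|M. (p x - q x) \<bullet> r x) = (LINT x|M. p x \<bullet> r x) - (LINT x|M. q x \<bullet> r x)"
  using assms by (simp add: inner_diff_left integrable_inner_vsq_int)

lemma integral_inner_diff_right:
  fixes p q r :: "'a \<Rightarrow> real^'n"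
  assumes "vsq_int M p" "vsq_int M q" "vsq_int M r"
  shows "(LINT x|M. p x \<bullet> (q x - r x)) = (LINT x|M. p x \<bullet> q x) - (LINT x|M. p x \<bullet> r x)"
  using assms by (simp add: inner_diff_right integrable_inner_vsq_int)

lemma vsq_int_matrix_vector_mult:
  fixes B :: "'a \<Rightarrow> real^'n^'m"
  assumes p: "vsq_int M p" and meas: "(\<lambda>x. B x *v p x) \<in> borel_measurable M"
    and bound: "AE x in M. \<forall>\<xi>. norm (B x *v \<xi>) \<le> K * norm \<xi>"
  shows "vsq_int M (\<lambda>x. B x *v p x)"
  unfolding vsq_int_def
proof
  show "(\<lambda>x. B x *v p x) \<in> borel_measurable M" by (rule meas)
  show "integrable M (\<lambda>x. (norm (B x *v p x))\<^sup>2)"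
  proof (rule Bochner_Integration.integrable_bound)
    show "integrable M (\<lambda>x. K\<^sup>2 * (norm (p x))\<^sup>2)"
      using p unfolding vsq_int_def by simp
    show "(\<lambda>x. (norm (B x *v p x))\<^sup>2) \<in> borel_measurable M"
      using meas by measurable
    show "AE x in M. norm ((norm (B x *v p x))\<^sup>2) \<le> norm (K\<^sup>2 * (norm (p x))\<^sup>2)"
      using bound
    proof eventually_elim
      case (elim x)
      then have "(norm (B x *v p x))\<^sup>2 \<le> (K * norm (p x))\<^sup>2"
        by (intro power_mono) auto
      then show ?case by (simp add: power_mult_distrib)
    qed
  qed
qed

lemma quadratic_nonneg_discriminant:
  fixes a b c :: real
  assumes nonneg: "\<And>t. 0 \<le> a + 2 * t * b + t\<^sup>2 * c" and "0 \<le> c"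
  shows "b\<^sup>2 \<le> a * c"
proof (cases "c = 0")
  case True
  have "0 \<le> a + 2 * (- (a + 1) / (2 * b)) * b" if "b \<noteq> 0"
    using nonneg[of "- (a + 1) / (2 * b)"] True by simp
  then show ?thesis using True by (cases "b = 0") (simp_all add: field_simps)
next
  case False
  then have "0 < c" using \<open>0 \<le> c\<close> by simp
  have "0 \<le> a + 2 * (- b / c) * b + (- b / c)\<^sup>2 * c" by (rule nonneg)
  also have "\<dots> = a - b\<^sup>2 / c" using \<open>0 < c\<close> by (simp add: power2_eq_square field_simps)
  finally show ?thesis using \<open>0 < c\<close> by (simp add: field_simps)
qed

lemma integral_Cauchy_Schwarz_weighted:
  fixes B :: "'a \<Rightarrow> real^'n^'n"
  assumes s: "vsq_int M s" "vsq_int M (\<lambda>x. B x *v s x)"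
    and w: "vsq_int M w" "vsq_int M (\<lambda>x. B x *v w x)"
    and sym: "AE x in M. \<forall>y z. (B x *v y) \<bullet> z = y \<bullet> (B x *v z)"
    and nonneg: "AE x in M. \<forall>y. 0 \<le> (B x *v y) \<bullet> y"
  shows "\<bar>LINT x|M. (B x *v s x) \<bullet> w x\<bar>
    \<le> sqrt (LINT x|M. (B x *v s x) \<bullet> s x) * sqrt (LINT x|M. (B x *v w x) \<bullet> w x)"
proof -
  define a where "a = (LINT x|M. (B x *v s x) \<bullet> s x)"
  define b where "b = (LINT x|M. (B x *v s x) \<bullet> w x)"
  define c where "c = (LINT x|M. (B x *v w x) \<bullet> w x)"
  have integrable: "integrable M (\<lambda>x. (B x *v s x) \<bullet> s x)" "integrable M (\<lambda>x. (B x *v s x) \<bullet> w x)"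
    "integrable M (\<lambda>x. (B x *v w x) \<bullet> w x)"
    using s w by (simp_all add: integrable_inner_vsq_int)
  have "0 \<le> a + 2 * t * b + t\<^sup>2 * c" for t
  proof -
    let ?z = "\<lambda>x. s x + t *\<^sub>R w x"
    let ?expansion = "\<lambda>x. (B x *v s x) \<bullet> s x + 2 * t * ((B x *v s x) \<bullet> w x) + t\<^sup>2 * ((B x *v w x) \<bullet> w x)"
    have Bz: "B x *v ?z x = B x *v s x + t *\<^sub>R (B x *v w x)" for x
      by (simp add: matrix_vector_right_distrib matrix_vector_mult_scaleR)
    have "integrable M (\<lambda>x. (B x *v ?z x) \<bullet> ?z x)"
      unfolding Bz using s w by (intro integrable_inner_vsq_int vsq_int_add vsq_int_scaleR)
    then have "(LINT x|M. (B x *v ?z x) \<bullet> ?z x) = integral\<^sup>L M ?expansion"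
    proof (intro integral_cong_AE)
      show "AE x in M. (B x *v ?z x) \<bullet> ?z x = ?expansion x"
        using sym by eventually_elim (simp add: Bz inner_commute power2_eq_square algebra_simps)
    qed (use integrable in \<open>simp_all add: borel_measurable_integrable\<close>)
    also have "\<dots> = a + 2 * t * b + t\<^sup>2 * c"
      unfolding a_def b_def c_def using integrable by simp
    moreover have "0 \<le> (LINT x|M. (B x *v ?z x) \<bullet> ?z x)"
      using nonneg by (intro integral_nonneg_AE) auto
    ultimately show ?thesis
      by simp
  qed
  moreover have "0 \<le> c"
    unfolding c_def using nonneg by (intro integral_nonneg_AE) auto
  ultimately have "b\<^sup>2 \<le> a * c"
    by (rule quadratic_nonneg_discriminant)
  then have "\<bar>b\<bar> \<le> sqrt (a * c)"
    using real_sqrt_le_mono by fastforce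
  then show ?thesis
    unfolding a_def b_def c_def by (simp add: real_sqrt_mult)
qed

lemma hypercircle_correction_identity:
  fixes A B :: "real^'n^'n"
  assumes BA: "\<And>y. B *v (A *v y) = y"
    and B_sym: "\<And>x y. (B *v x) \<bullet> y = x \<bullet> (B *v y)"
    and A_sym: "\<And>x y. (A *v x) \<bullet> y = x \<bullet> (A *v y)"
  shows "(B *v (qt - A *v gt)) \<bullet> (A *v e - (1/2) *\<^sub>R (qh + A *v gh))
      + (1/2) * ((B *v (qh - A *v gh)) \<bullet> (qt + A *v gt))
    = qt \<bullet> (e - gh) - (A *v e - qh) \<bullet> gt"
proof -
  have "(B *v x) \<bullet> (A *v y) = x \<bullet> y" "(A *v y) \<bullet> (B *v x) = y \<bullet> x" for x y
    using B_sym BA by (simp_all add: inner_commute)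
  moreover have "(B *v x) \<bullet> y = (B *v y) \<bullet> x" "(A *v x) \<bullet> y = (A *v y) \<bullet> x" for x y
    using B_sym A_sym by (metis inner_commute)+
  ultimately show ?thesis
    by (simp add: inner_diff_left inner_diff_right inner_add_left inner_add_right
        matrix_vector_mult_diff_distrib matrix_vector_right_distrib inner_commute algebra_simps)
qed

lemma hypercircle_energy_identity:
  fixes A B :: "real^'n^'n"
  assumes BA: "\<And>y. B *v (A *v y) = y"
    and B_sym: "\<And>x y. (B *v x) \<bullet> y = x \<bullet> (B *v y)"
    and A_sym: "\<And>x y. (A *v x) \<bullet> y = x \<bullet> (A *v y)"
  shows "(B *v (A *v e - (1/2) *\<^sub>R (qh + A *v gh))) \<bullet> (A *v e - (1/2) *\<^sub>R (qh + A *v gh))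
    = (1/4) * ((B *v (qh - A *v gh)) \<bullet> (qh - A *v gh)) + (A *v e - qh) \<bullet> (e - gh)"
proof -
  have "(B *v x) \<bullet> (A *v y) = x \<bullet> y" "(A *v y) \<bullet> (B *v x) = y \<bullet> x" for x y
    using B_sym BA by (simp_all add: inner_commute)
  moreover have "(B *v x) \<bullet> y = (B *v y) \<bullet> x" "(A *v x) \<bullet> y = (A *v y) \<bullet> x" for x y
    using B_sym A_sym by (metis inner_commute)+
  ultimately show ?thesis
    by (simp add: BA inner_diff_left inner_diff_right inner_add_left inner_add_right
        matrix_vector_mult_diff_distrib matrix_vector_right_distrib matrix_vector_mult_scaleR
        inner_commute algebra_simps)
qed

locale elliptic_matrix_field =
  fixes M :: "'a measure" and \<alpha> :: real and A :: "'a \<Rightarrow> real^'n^'n"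
  assumes coercivity_pos: "0 < \<alpha>"
    and measurable_entries: "\<And>i j. (\<lambda>x. A x $ i $ j) \<in> borel_measurable M"
    and bounded_entries: "\<exists>K. AE x in M. \<forall>i j. \<bar>A x $ i $ j\<bar> \<le> K"
    and symmetric: "AE x in M. transpose (A x) = A x"
    and coercive: "AE x in M. \<forall>\<xi>. \<alpha> * (norm \<xi>)\<^sup>2 \<le> (A x *v \<xi>) \<bullet> \<xi>"
begin

lemma AE_invertible: "AE x in M. invertible (A x)"
  using coercive by eventually_elim (rule coercive_matrix_invertible[OF coercivity_pos])

lemma AE_inverse_self_adjoint:
  "AE x in M. (\<forall>y. matrix_inv (A x) *v (A x *v y) = y)
    \<and> (\<forall>y z. (matrix_inv (A x) *v y) \<bullet> z = y \<bullet> (matrix_inv (A x) *v z))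
    \<and> (\<forall>y z. (A x *v y) \<bullet> z = y \<bullet> (A x *v z))"
  using symmetric AE_invertible
  by eventually_elim (simp add: matrix_inv_mult_left symmetric_matrix_inv_inner symmetric_matrix_inner)

lemma vsq_int_coeff_mult:
  assumes "vsq_int M p"
  shows "vsq_int M (\<lambda>x. A x *v p x)"
proof -
  obtain K where "AE x in M. \<forall>i j. \<bar>A x $ i $ j\<bar> \<le> K"
    using bounded_entries by blast
  then have bound: "AE x in M. \<forall>\<xi>. norm (A x *v \<xi>) \<le> (real CARD('n) * real CARD('n) * K) * norm \<xi>"
  proof eventually_elim
    case (elim x)
    show ?case
      using order_trans[OF onorm[OF matrix_vector_mul_bounded_linear]
          mult_right_mono[OF onorm_le_matrix_component norm_ge_zero]] elim
      by blast
  qed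
  show ?thesis
    using assms by (intro vsq_int_matrix_vector_mult[OF assms _ bound] borel_measurable_matrix_vector_mult
        measurable_entries) (simp add: vsq_int_def)
qed

lemma vsq_int_coeff_inv_mult:
  assumes "vsq_int M p"
  shows "vsq_int M (\<lambda>x. matrix_inv (A x) *v p x)"
proof -
  have bound: "AE x in M. \<forall>\<xi>. norm (matrix_inv (A x) *v \<xi>) \<le> (1 / \<alpha>) * norm \<xi>"
    using AE_invertible coercive
    by eventually_elim (blast intro: norm_coercive_matrix_inv_mult_le[OF coercivity_pos])
  show ?thesis
    using assms by (intro vsq_int_matrix_vector_mult[OF assms _ bound] borel_measurable_matrix_inv_mult
        measurable_entries) (simp add: vsq_int_def)
qed

lemma energy_Cauchy_Schwarz:
  assumes "vsq_int M s" "vsq_int M w"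
  shows "\<bar>LINT x|M. (matrix_inv (A x) *v s x) \<bullet> w x\<bar>
    \<le> sqrt (LINT x|M. (matrix_inv (A x) *v s x) \<bullet> s x) * sqrt (LINT x|M. (matrix_inv (A x) *v w x) \<bullet> w x)"
proof (rule integral_Cauchy_Schwarz_weighted)
  show "AE x in M. \<forall>y z. (matrix_inv (A x) *v y) \<bullet> z = y \<bullet> (matrix_inv (A x) *v z)"
    using AE_inverse_self_adjoint by eventually_elim blast
  show "AE x in M. \<forall>y. 0 \<le> (matrix_inv (A x) *v y) \<bullet> y"
    using AE_invertible coercive
    by eventually_elim (simp add: coercive_matrix_inv_inner_nonneg[OF coercivity_pos])
qed (simp_all add: assms vsq_int_coeff_inv_mult)

lemma hypercircle_correction:
  assumes "vsq_int M e" "vsq_int M gh" "vsq_int M gt" "vsq_int M qh" "vsq_int M qt"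
  shows "(LINT x|M. (matrix_inv (A x) *v (qt x - A x *v gt x)) \<bullet> (A x *v e x - (1/2) *\<^sub>R (qh x + A x *v gh x)))
    = (LINT x|M. qt x \<bullet> (e x - gh x)) - (LINT x|M. (A x *v e x - qh x) \<bullet> gt x)
      - (1/2) * (LINT x|M. (matrix_inv (A x) *v (qh x - A x *v gh x)) \<bullet> (qt x + A x *v gt x))"
    (is "integral\<^sup>L M ?X = integral\<^sup>L M ?L - integral\<^sup>L M ?R - (1/2) * integral\<^sup>L M ?C")
proof -
  have integrable: "integrable M ?X" "integrable M ?C" "integrable M ?L" "integrable M ?R"
    using assms by (simp_all add: integrable_inner_vsq_int vsq_int_coeff_inv_mult vsq_int_coeff_mult vsq_int_add
        vsq_int_diff vsq_int_scaleR)
  have "integral\<^sup>L M ?X + (1/2) * integral\<^sup>L M ?C = (LINT x|M. ?X x + (1/2) * ?C x)"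
    using integrable by simp
  also have "\<dots> = (LINT x|M. ?L x - ?R x)"
  proof (rule integral_cong_AE)
    show "AE x in M. ?X x + (1/2) * ?C x = ?L x - ?R x"
      using AE_inverse_self_adjoint by eventually_elim (rule hypercircle_correction_identity; blast)
  qed (use integrable in \<open>simp_all add: borel_measurable_integrable\<close>)
  also have "\<dots> = integral\<^sup>L M ?L - integral\<^sup>L M ?R"
    using integrable by simp
  finally show ?thesis
    by linarith
qed

lemma hypercircle_energy:
  assumes "vsq_int M e" "vsq_int M gh" "vsq_int M qh"
  shows "(LINT x|M. (matrix_inv (A x) *v (A x *v e x - (1/2) *\<^sub>R (qh x + A x *v gh x)))
        \<bullet> (A x *v e x - (1/2) *\<^sub>R (qh x + A x *v gh x)))
    = (1/4) * (LINT x|M. (matrix_inv (A x) *v (qh x - A x *v gh x)) \<bullet> (qh x - A x *v gh x))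
      + (LINT x|M. (A x *v e x - qh x) \<bullet> (e x - gh x))"
    (is "integral\<^sup>L M ?W = (1/4) * integral\<^sup>L M ?E + integral\<^sup>L M ?O")
proof -
  have integrable: "integrable M ?W" "integrable M ?E" "integrable M ?O"
    using assms by (simp_all add: integrable_inner_vsq_int vsq_int_coeff_inv_mult vsq_int_coeff_mult vsq_int_add
        vsq_int_diff vsq_int_scaleR)
  have "integral\<^sup>L M ?W = (LINT x|M. (1/4) * ?E x + ?O x)"
  proof (rule integral_cong_AE)
    show "AE x in M. ?W x = (1/4) * ?E x + ?O x"
      using AE_inverse_self_adjoint by eventually_elim (rule hypercircle_energy_identity; blast)
  qed (use integrable in \<open>simp_all add: borel_measurable_integrable\<close>)
  also have "\<dots> = (1/4) * integral\<^sup>L M ?E + integral\<^sup>L M ?O"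
    using integrable by simp
  finally show ?thesis .
qed

theorem hypercircle_estimate:
  assumes L2: "vsq_int M e" "vsq_int M gh" "vsq_int M gt" "vsq_int M qh" "vsq_int M qt"
    and orth: "(LINT x|M. (A x *v e x - qh x) \<bullet> (e x - gh x)) = 0"
      "(LINT x|M. (A x *v e x - qh x) \<bullet> gt x) = 0"
  shows "\<bar>(LINT x|M. qt x \<bullet> (e x - gh x))
      - (1/2) * (LINT x|M. (matrix_inv (A x) *v (qh x - A x *v gh x)) \<bullet> (qt x + A x *v gt x))\<bar>
    \<le> (1/2) * sqrt (LINT x|M. (matrix_inv (A x) *v (qh x - A x *v gh x)) \<bullet> (qh x - A x *v gh x))
        * sqrt (LINT x|M. (matrix_inv (A x) *v (qt x - A x *v gt x)) \<bullet> (qt x - A x *v gt x))"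
proof -
  have "vsq_int M (\<lambda>x. qt x - A x *v gt x)" "vsq_int M (\<lambda>x. A x *v e x - (1/2) *\<^sub>R (qh x + A x *v gh x))"
    using L2 by (simp_all add: vsq_int_coeff_mult vsq_int_add vsq_int_diff vsq_int_scaleR)
  from energy_Cauchy_Schwarz[OF this]
  show ?thesis
    unfolding hypercircle_correction[OF L2] hypercircle_energy[OF L2(1,2,4)] orth
    by (simp add: real_sqrt_mult real_sqrt_divide mult_ac)
qed

end

lemma wgrad_Vsp:
  assumes "v \<in> Vsp \<Omega> \<Gamma>D"
  shows "vsq_int (lebesgue_on \<Omega>) (wgrad \<Omega> v)" and "is_wgrad \<Omega> v (wgrad \<Omega> v)"
proof -
  have "\<exists>G. vsq_int (lebesgue_on \<Omega>) G \<and> is_wgrad \<Omega> v G"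
    using assms unfolding Vsp_def H1_def by blast
  then have "vsq_int (lebesgue_on \<Omega>) (wgrad \<Omega> v) \<and> is_wgrad \<Omega> v (wgrad \<Omega> v)"
    unfolding wgrad_def by (rule someI_ex)
  then show "vsq_int (lebesgue_on \<Omega>) (wgrad \<Omega> v)" "is_wgrad \<Omega> v (wgrad \<Omega> v)"
    by blast+
qed

lemma abs_le_max_shift:
  fixes a b c h :: real
  assumes "\<bar>a - b - c\<bar> \<le> h"
  shows "\<bar>a\<bar> \<le> max \<bar>b + c + h\<bar> \<bar>b + c - h\<bar>"
  using assms by linarith

theorem mainTheorem1:
  fixes \<Omega> \<Gamma>D \<Gamma>N :: "(real,'d::finite) vec set"
    and A :: "(real,'d) vec \<Rightarrow> ((real,'d) vec,'d) vec"
    and \<alpha> \<beta> :: real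
    and f g :: "(real,'d) vec \<Rightarrow> real"
    and QW :: "'w::real_vector \<Rightarrow> real"
    and \<iota> :: "((real,'d) vec \<Rightarrow> real) \<Rightarrow> 'w"
    and u uh uth :: "(real,'d) vec \<Rightarrow> real"
    and uH :: 'w
    and qh qth :: "(real,'d) vec \<Rightarrow> (real,'d) vec"
  assumes \<Omega>: "open \<Omega>" "bounded \<Omega>"
    and \<Gamma>D: "\<Gamma>D \<subseteq> frontier \<Omega>" "emeasure surface_measure \<Gamma>D > 0"
    and \<Gamma>N: "\<Gamma>N = frontier \<Omega> - \<Gamma>D"
    and A_meas: "\<forall>i j. (\<lambda>x. A x $ i $ j) \<in> borel_measurable (lebesgue_on \<Omega>)"
    and A_bdd: "\<exists>M. AE x in lebesgue_on \<Omega>. \<forall>i j. \<bar>A x $ i $ j\<bar> \<le> M"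
    and A_sym: "AE x in lebesgue_on \<Omega>. transpose (A x) = A x"
    and \<alpha>\<beta>: "0 < \<alpha>" "\<alpha> \<le> \<beta>"
    and A_ell: "AE x in lebesgue_on \<Omega>. \<forall>\<xi>.
                  \<alpha> * (norm \<xi>)\<^sup>2 \<le> (A x *v \<xi>) \<bullet> \<xi> \<and> (A x *v \<xi>) \<bullet> \<xi> \<le> \<beta> * (norm \<xi>)\<^sup>2"
    and f: "sq_int (lebesgue_on \<Omega>) f"
    and g: "g \<in> borel_measurable surface_measure"
           "integrable surface_measure (\<lambda>x. indicator \<Gamma>N x * (g x)\<^sup>2)"
    and QW_lin: "linear QW"
    and \<iota>_lin: "\<forall>v\<in>Vsp \<Omega> \<Gamma>D. \<forall>w\<in>Vsp \<Omega> \<Gamma>D. \<iota> (\<lambda>x. v x + w x) = \<iota> v + \<iota> w"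
              "\<forall>c. \<forall>v\<in>Vsp \<Omega> \<Gamma>D. \<iota> (\<lambda>x. c * v x) = c *\<^sub>R \<iota> v"
    and Q_cont: "\<exists>C. \<forall>v\<in>Vsp \<Omega> \<Gamma>D. \<bar>QW (\<iota> v)\<bar> \<le> C * H1_norm \<Omega> v"
    and u: "u \<in> Vsp \<Omega> \<Gamma>D"
           "\<forall>v\<in>Vsp \<Omega> \<Gamma>D. \<forall>G. vsq_int (lebesgue_on \<Omega>) G \<and> is_wgrad \<Omega> v G \<longrightarrow>
              (LINT x|lebesgue_on \<Omega>. (A x *v wgrad \<Omega> u x) \<bullet> G x) = Ffun \<Omega> \<Gamma>N f g v"
    and uh: "uh \<in> Vsp \<Omega> \<Gamma>D" and uth: "uth \<in> Vsp \<Omega> \<Gamma>D"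
    and qh: "Hdiv \<Omega> qh"
            "\<forall>v\<in>Vsp \<Omega> \<Gamma>D. \<forall>G. vsq_int (lebesgue_on \<Omega>) G \<and> is_wgrad \<Omega> v G \<longrightarrow>
              (LINT x|lebesgue_on \<Omega>. qh x \<bullet> G x) = Ffun \<Omega> \<Gamma>N f g v"
    and qth: "Hdiv \<Omega> qth"
            "\<forall>v\<in>Vsp \<Omega> \<Gamma>D. \<forall>G. vsq_int (lebesgue_on \<Omega>) G \<and> is_wgrad \<Omega> v G \<longrightarrow>
              (LINT x|lebesgue_on \<Omega>. qth x \<bullet> G x) = QW (\<iota> v)"
  shows "let \<Delta>Q = QW (\<iota> uh - uH);
             C = Cbar \<Omega> A uh qh uth qth;
             E = ECRE \<Omega> A uh qh;
             Et = ECRE \<Omega> A uth qth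
         in \<bar>QW (\<iota> u) - QW uH - \<Delta>Q - C\<bar> \<le> (1/2) * E * Et
          \<and> \<bar>QW (\<iota> u) - QW uH\<bar> \<le> max \<bar>\<Delta>Q + C + (1/2) * E * Et\<bar> \<bar>\<Delta>Q + C - (1/2) * E * Et\<bar>"
proof -
  let ?M = "lebesgue_on \<Omega>"
  interpret elliptic_matrix_field ?M \<alpha> A
    using \<alpha>\<beta>(1) A_meas A_bdd A_sym A_ell by unfold_locales auto
  define e gh gt where "e = wgrad \<Omega> u" and "gh = wgrad \<Omega> uh" and "gt = wgrad \<Omega> uth"
  have L2: "vsq_int ?M e" "vsq_int ?M gh" "vsq_int ?M gt" "vsq_int ?M qh" "vsq_int ?M qth"
    unfolding e_def gh_def gt_def using wgrad_Vsp u(1) uh uth qh(1) qth(1) Hdiv_def by blast+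
  have galerkin: "(LINT x|?M. (A x *v e x - qh x) \<bullet> wgrad \<Omega> v x) = 0" if "v \<in> Vsp \<Omega> \<Gamma>D" for v
    using u(2) qh(2) that wgrad_Vsp[OF that] L2
    by (simp add: integral_inner_diff_left vsq_int_coeff_mult e_def)
  have orth: "(LINT x|?M. (A x *v e x - qh x) \<bullet> (e x - gh x)) = 0"
    using galerkin[OF u(1)] galerkin[OF uh] L2
    by (simp add: integral_inner_diff_right vsq_int_coeff_mult vsq_int_diff e_def gh_def)
  have Q_flux: "QW (\<iota> v) = (LINT x|?M. qth x \<bullet> wgrad \<Omega> v x)" if "v \<in> Vsp \<Omega> \<Gamma>D" for v
    using qth(2)[rule_format, OF that conjI[OF wgrad_Vsp[OF that]]] by (rule sym)
  have "QW (\<iota> u) - QW (\<iota> uh) = (LINT x|?M. qth x \<bullet> (e x - gh x))"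
    unfolding integral_inner_diff_right[OF L2(5,1,2)] Q_flux[OF u(1), folded e_def]
      Q_flux[OF uh, folded gh_def] ..
  moreover have "QW (\<iota> uh - uH) = QW (\<iota> uh) - QW uH"
    by (rule linear_diff[OF QW_lin])
  moreover note hypercircle_estimate[OF L2 orth galerkin[OF uth, folded gt_def]]
  ultimately have estimate: "\<bar>QW (\<iota> u) - QW uH - QW (\<iota> uh - uH) - Cbar \<Omega> A uh qh uth qth\<bar>
      \<le> (1/2) * ECRE \<Omega> A uh qh * ECRE \<Omega> A uth qth"
    unfolding Cbar_def ECRE_def e_def gh_def gt_def by simp
  show ?thesis
    unfolding Let_def by (intro conjI estimate abs_le_max_shift)
qed

end
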